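(* Let $L$ be a finite power associative loop that is left power alternative and has the left inverse property. Then $L$ has the strong monogenic Lagrange property: for every subloop $H$ of $L$ and every $x\in H$, the order of the subloop $\langle x\rangle$ generated by $x$ divides $|H|$.
   Context: A loop is power associative if each subloop generated by one element is a group. It is left power alternative if $L_{x^n}=L_x^n$ for all $x$ and $n>0$, where $L_a$ is the left translation $y\mapsto ay$. It has the left inverse property if $x^{-1}(xy)=y$ for all $x,y$, where $x^{-1}$ is the element with $x^{-1}x=e$. *)

theory Defs
  imports Main
begin

definition loop :: "'a set \<Rightarrow> ('a \<Rightarrow> 'a \<Rightarrow> 'a) \<Rightarrow> 'a \<Rightarrow> bool" where
  "loop L m e \<longleftrightarrow> e \<in> L \<and> (\<forall>x\<in>L. \<forall>y\<in>L. m x y \<in> L)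
     \<and> (\<forall>x\<in>L. m e x = x \<and> m x e = x)
     \<and> (\<forall>a\<in>L. \<forall>b\<in>L. \<exists>!x. x \<in> L \<and> m a x = b)
     \<and> (\<forall>a\<in>L. \<forall>b\<in>L. \<exists>!y. y \<in> L \<and> m y a = b)"

definition subloop :: "'a set \<Rightarrow> 'a set \<Rightarrow> ('a \<Rightarrow> 'a \<Rightarrow> 'a) \<Rightarrow> 'a \<Rightarrow> bool" where
  "subloop H L m e \<longleftrightarrow> H \<subseteq> L \<and> loop H m e"

definition gen_subloop :: "'a set \<Rightarrow> ('a \<Rightarrow> 'a \<Rightarrow> 'a) \<Rightarrow> 'a \<Rightarrow> 'a set \<Rightarrow> 'a set" where
  "gen_subloop L m e X = \<Inter>{H. subloop H L m e \<and> X \<subseteq> H}"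

definition power_associative :: "'a set \<Rightarrow> ('a \<Rightarrow> 'a \<Rightarrow> 'a) \<Rightarrow> 'a \<Rightarrow> bool" where
  "power_associative L m e \<longleftrightarrow> (\<forall>x\<in>L. let S = gen_subloop L m e {x} in
     loop S m e \<and> (\<forall>a\<in>S. \<forall>b\<in>S. \<forall>c\<in>S. m (m a b) c = m a (m b c)))"

text \<open>Powers x^n (well-defined regardless of bracketing in a power associative loop).\<close>
primrec lpow :: "('a \<Rightarrow> 'a \<Rightarrow> 'a) \<Rightarrow> 'a \<Rightarrow> 'a \<Rightarrow> nat \<Rightarrow> 'a" where
  "lpow m e x 0 = e"
| "lpow m e x (Suc n) = m x (lpow m e x n)"

definition left_power_alternative :: "'a set \<Rightarrow> ('a \<Rightarrow> 'a \<Rightarrow> 'a) \<Rightarrow> 'a \<Rightarrow> bool" where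
  "left_power_alternative L m e \<longleftrightarrow>
     (\<forall>x\<in>L. \<forall>n>0. \<forall>y\<in>L. m (lpow m e x n) y = ((m x) ^^ n) y)"

definition linv :: "'a set \<Rightarrow> ('a \<Rightarrow> 'a \<Rightarrow> 'a) \<Rightarrow> 'a \<Rightarrow> 'a \<Rightarrow> 'a" where
  "linv L m e x = (THE z. z \<in> L \<and> m z x = e)"

definition left_inverse_property :: "'a set \<Rightarrow> ('a \<Rightarrow> 'a \<Rightarrow> 'a) \<Rightarrow> 'a \<Rightarrow> bool" where
  "left_inverse_property L m e \<longleftrightarrow> (\<forall>x\<in>L. \<forall>y\<in>L. m (linv L m e x) (m x y) = y)"

definition strong_monogenic_Lagrange :: "'a set \<Rightarrow> ('a \<Rightarrow> 'a \<Rightarrow> 'a) \<Rightarrow> 'a \<Rightarrow> bool" where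
  "strong_monogenic_Lagrange L m e \<longleftrightarrow>
     (\<forall>H. subloop H L m e \<longrightarrow> (\<forall>x\<in>H. card (gen_subloop L m e {x}) dvd card H))"

end

theory Submission
  imports Defs
begin

text \<open>Left power alternativity says that left multiplication by powers of x composes like
  the powers themselves, L_{x^a} L_{x^b} = L_{x^(a+b)}. Hence the powers of x form a finite
  subloop S = <x> of every subloop H containing x, and S acts on H by left multiplication.
  The orbits S y of this action partition H, and by right cancellation each of them has
  exactly |S| elements, so |S| divides |H|.\<close>

lemma loop_unit: "loop L m e \<Longrightarrow> e \<in> L"
  unfolding loop_def by simp

lemma loop_mult_closed: "loop L m e \<Longrightarrow> a \<in> L \<Longrightarrow> b \<in> L \<Longrightarrow> m a b \<in> L"
  unfolding loop_def by simp

lemma loop_left_unit: "loop L m e \<Longrightarrow> a \<in> L \<Longrightarrow> m e a = a"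
  unfolding loop_def by simp

lemma loop_right_unit: "loop L m e \<Longrightarrow> a \<in> L \<Longrightarrow> m a e = a"
  unfolding loop_def by simp

lemma loop_left_div_unique:
  assumes "loop L m e" "a \<in> L" "b \<in> L"
  shows "\<exists>!z. z \<in> L \<and> m a z = b"
proof -
  have div: "\<forall>a\<in>L. \<forall>b\<in>L. \<exists>!z. z \<in> L \<and> m a z = b"
    using assms(1) unfolding loop_def by (elim conjE)
  show ?thesis using bspec[OF bspec[OF div assms(2)] assms(3)] .
qed

lemma loop_right_div_unique:
  assumes "loop L m e" "a \<in> L" "b \<in> L"
  shows "\<exists>!z. z \<in> L \<and> m z a = b"
proof -
  have div: "\<forall>a\<in>L. \<forall>b\<in>L. \<exists>!z. z \<in> L \<and> m z a = b"
    using assms(1) unfolding loop_def by (elim conjE)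
  show ?thesis using bspec[OF bspec[OF div assms(2)] assms(3)] .
qed

lemma loop_left_cancel:
  assumes "loop L m e" "x \<in> L" "a \<in> L" "b \<in> L" "m x a = m x b"
  shows "a = b"
  using loop_left_div_unique[OF assms(1,2) loop_mult_closed[OF assms(1-3)]] assms(3-5)
  by (metis (no_types, lifting))

lemma loop_right_cancel:
  assumes "loop L m e" "y \<in> L" "a \<in> L" "b \<in> L" "m a y = m b y"
  shows "a = b"
  using loop_right_div_unique[OF assms(1,2) loop_mult_closed[OF assms(1,3,2)]] assms(3-5)
  by (metis (no_types, lifting))

lemma loop_left_inverse_ex: "loop L m e \<Longrightarrow> a \<in> L \<Longrightarrow> \<exists>b\<in>L. m b a = e"
  using loop_right_div_unique loop_unit by (metis ex1_implies_ex)

lemma loop_if_finite_mult_closed: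
  assumes L: "loop L m e" and "P \<subseteq> L" "finite P" "e \<in> P"
    and closed: "\<And>a b. a \<in> P \<Longrightarrow> b \<in> P \<Longrightarrow> m a b \<in> P"
  shows "loop P m e"
proof -
  have left: "(m a) ` P = P" if "a \<in> P" for a
  proof (rule endo_inj_surj)
    show "inj_on (m a) P"
      using that \<open>P \<subseteq> L\<close> loop_left_cancel[OF L] by (meson inj_onI subsetD)
  qed (use that closed \<open>finite P\<close> in auto)
  have right: "(\<lambda>z. m z a) ` P = P" if "a \<in> P" for a
  proof (rule endo_inj_surj)
    show "inj_on (\<lambda>z. m z a) P"
      using that \<open>P \<subseteq> L\<close> loop_right_cancel[OF L] by (meson inj_onI subsetD)
  qed (use that closed \<open>finite P\<close> in auto)
  show ?thesis
    unfolding loop_def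
  proof (intro conjI ballI)
    fix a b assume ab: "a \<in> P" "b \<in> P"
    obtain c where c: "c \<in> P" "m a c = b"
      using left[OF ab(1)] ab(2) by (metis imageE)
    show "\<exists>!z. z \<in> P \<and> m a z = b"
    proof (rule ex1I[of _ c])
      fix z assume "z \<in> P \<and> m a z = b"
      then show "z = c"
        using c ab(1) \<open>P \<subseteq> L\<close> loop_left_cancel[OF L, of a z c] by auto
    qed (use c in simp)
    obtain d where d: "d \<in> P" "m d a = b"
      using right[OF ab(1)] ab(2) by (metis imageE)
    show "\<exists>!z. z \<in> P \<and> m z a = b"
    proof (rule ex1I[of _ d])
      fix z assume "z \<in> P \<and> m z a = b"
      then show "z = d"
        using d ab(1) \<open>P \<subseteq> L\<close> loop_right_cancel[OF L, of a z d] by auto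
    qed (use d in simp)
  qed (use assms loop_left_unit[OF L] loop_right_unit[OF L] in auto)
qed

lemma subloop_card_dvd_of_left_action:
  assumes H: "loop H m e" and "finite H" and S: "subloop S H m e"
    and action: "\<And>s t y. s \<in> S \<Longrightarrow> t \<in> S \<Longrightarrow> y \<in> H \<Longrightarrow> m s (m t y) = m (m s t) y"
  shows "card S dvd card H"
proof -
  have SH: "S \<subseteq> H" and "loop S m e" using S unfolding subloop_def by auto
  define orbit where "orbit y = (\<lambda>s. m s y) ` S" for y
  have orbit_sub: "orbit y \<subseteq> H" if "y \<in> H" for y
    using that SH loop_mult_closed[OF H] unfolding orbit_def by blast
  have orbit_self: "y \<in> orbit y" if "y \<in> H" for y
    using that loop_unit[OF \<open>loop S m e\<close>] loop_left_unit[OF H] unfolding orbit_def by force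
  have card_orbit: "card (orbit y) = card S" if "y \<in> H" for y
    unfolding orbit_def
    using that SH loop_right_cancel[OF H, of y] by (intro card_image inj_onI) blast
  have orbit_mult: "orbit (m t y) = orbit y" if "t \<in> S" "y \<in> H" for t y
  proof
    have "m t y \<in> H" using that SH loop_mult_closed[OF H] by blast
    show "orbit (m t y) \<subseteq> orbit y"
      using that action loop_mult_closed[OF \<open>loop S m e\<close>] unfolding orbit_def by auto
    obtain t' where t': "t' \<in> S" "m t' t = e"
      using loop_left_inverse_ex[OF \<open>loop S m e\<close> \<open>t \<in> S\<close>] by blast
    then have inverse_t: "m t' (m t y) = y"
      using that action loop_left_unit[OF H] by simp
    have "m s y = m (m s t') (m t y)" if "s \<in> S" for s
      using action[OF that t'(1) \<open>m t y \<in> H\<close>] by (simp add: inverse_t)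
    then show "orbit y \<subseteq> orbit (m t y)"
      using t'(1) loop_mult_closed[OF \<open>loop S m e\<close>] unfolding orbit_def by auto
  qed
  have orbits_meet: "orbit y = orbit z"
    if "y \<in> H" "z \<in> H" and meet: "orbit y \<inter> orbit z \<noteq> {}" for y z
  proof -
    obtain s t where "s \<in> S" "t \<in> S" "m s y = m t z"
      using meet unfolding orbit_def by blast
    then show ?thesis using \<open>y \<in> H\<close> \<open>z \<in> H\<close> orbit_mult by metis
  qed
  have "card S * card (orbit ` H) = card (\<Union> (orbit ` H))"
    using \<open>finite H\<close> card_orbit orbits_meet orbit_sub
    by (intro card_partition) (auto intro: finite_subset[OF orbit_sub])
  also have "\<Union> (orbit ` H) = H"
    using orbit_sub orbit_self by blast
  finally show ?thesis by (metis dvd_triv_left)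
qed

lemma lpow_eq_funpow: "lpow m e x n = (m x ^^ n) e"
  by (induction n) auto

lemma lpow_closed: "loop K m e \<Longrightarrow> x \<in> K \<Longrightarrow> lpow m e x n \<in> K"
  by (induction n) (auto intro: loop_unit loop_mult_closed)

lemma left_power_alternative_lpow:
  assumes "loop L m e" "left_power_alternative L m e" "x \<in> L" "y \<in> L"
  shows "m (lpow m e x n) y = (m x ^^ n) y"
proof (cases "n = 0")
  case True
  then show ?thesis using loop_left_unit[OF assms(1,4)] by simp
next
  case False
  then show ?thesis using assms(2-4) unfolding left_power_alternative_def by blast
qed

lemma left_power_alternative_lpow_mult:
  assumes "loop L m e" "left_power_alternative L m e" "x \<in> L"
  shows "m (lpow m e x a) (lpow m e x b) = lpow m e x (a + b)"
proof -
  have "m (lpow m e x a) (lpow m e x b) = (m x ^^ a) (lpow m e x b)"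
    using left_power_alternative_lpow[OF assms lpow_closed[OF assms(1,3)]] .
  then show ?thesis by (simp add: lpow_eq_funpow funpow_add)
qed

lemma left_power_alternative_lpow_action:
  assumes L: "loop L m e" "left_power_alternative L m e" "x \<in> L" and "y \<in> L"
  shows "m (lpow m e x a) (m (lpow m e x b) y) = m (m (lpow m e x a) (lpow m e x b)) y"
proof -
  have "m (lpow m e x b) y \<in> L"
    using loop_mult_closed[OF L(1) lpow_closed[OF L(1,3)] \<open>y \<in> L\<close>] .
  then have "m (lpow m e x a) (m (lpow m e x b) y) = (m x ^^ a) ((m x ^^ b) y)"
    using left_power_alternative_lpow[OF L] \<open>y \<in> L\<close> by simp
  also have "\<dots> = m (lpow m e x (a + b)) y"
    using left_power_alternative_lpow[OF L \<open>y \<in> L\<close>] by (simp add: funpow_add)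
  also have "\<dots> = m (m (lpow m e x a) (lpow m e x b)) y"
    using left_power_alternative_lpow_mult[OF L] by simp
  finally show ?thesis .
qed

lemma loop_powers:
  assumes L: "loop L m e" "finite L" "left_power_alternative L m e" and "x \<in> L"
  shows "loop (range (lpow m e x)) m e"
proof (rule loop_if_finite_mult_closed[OF L(1)])
  show "range (lpow m e x) \<subseteq> L" using lpow_closed[OF L(1) \<open>x \<in> L\<close>] by blast
  then show "finite (range (lpow m e x))" using L(2) finite_subset by blast
  show "e \<in> range (lpow m e x)" using lpow.simps(1) by (metis rangeI)
  have "m (lpow m e x a) (lpow m e x b) = lpow m e x (a + b)" for a b
    by (rule left_power_alternative_lpow_mult[OF L(1,3) \<open>x \<in> L\<close>])
  then show "m a b \<in> range (lpow m e x)" if "a \<in> range (lpow m e x)" "b \<in> range (lpow m e x)" for a b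
    using that by auto
qed

lemma gen_subloop_singleton_eq_powers:
  assumes L: "loop L m e" "finite L" "left_power_alternative L m e" and "x \<in> L"
  shows "gen_subloop L m e {x} = range (lpow m e x)"
proof
  have "lpow m e x 1 = x" by (simp add: loop_right_unit[OF L(1) \<open>x \<in> L\<close>])
  then have "x \<in> range (lpow m e x)" by (metis rangeI)
  moreover have "subloop (range (lpow m e x)) L m e"
    unfolding subloop_def using loop_powers[OF assms] lpow_closed[OF L(1) \<open>x \<in> L\<close>] by blast
  ultimately show "gen_subloop L m e {x} \<subseteq> range (lpow m e x)"
    unfolding gen_subloop_def by blast
  show "range (lpow m e x) \<subseteq> gen_subloop L m e {x}"
    unfolding gen_subloop_def subloop_def by (auto intro: lpow_closed)
qed

theorem lemma4p6:
  fixes L :: "'a set" and m :: "'a \<Rightarrow> 'a \<Rightarrow> 'a" and e :: 'a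
  assumes "loop L m e" and "finite L"
    and "power_associative L m e"
    and "left_power_alternative L m e"
    and "left_inverse_property L m e"
  shows "strong_monogenic_Lagrange L m e"
  unfolding strong_monogenic_Lagrange_def
proof (intro allI impI ballI)
  fix H x assume "subloop H L m e" "x \<in> H"
  then have "H \<subseteq> L" "loop H m e" "x \<in> L" unfolding subloop_def by auto
  then have "finite H" using \<open>finite L\<close> finite_subset by blast
  have "subloop (range (lpow m e x)) H m e"
    unfolding subloop_def
    using loop_powers[OF assms(1,2,4) \<open>x \<in> L\<close>] lpow_closed[OF \<open>loop H m e\<close> \<open>x \<in> H\<close>]
    by blast
  moreover have "m s (m t y) = m (m s t) y"
    if "s \<in> range (lpow m e x)" "t \<in> range (lpow m e x)" "y \<in> H" for s t y
    using that \<open>H \<subseteq> L\<close> left_power_alternative_lpow_action[OF assms(1,4) \<open>x \<in> L\<close>] by auto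
  ultimately have "card (range (lpow m e x)) dvd card H"
    by (rule subloop_card_dvd_of_left_action[OF \<open>loop H m e\<close> \<open>finite H\<close>])
  then show "card (gen_subloop L m e {x}) dvd card H"
    by (simp add: gen_subloop_singleton_eq_powers[OF assms(1,2,4) \<open>x \<in> L\<close>])
qed

end
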